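(* Let $D\ge 1$ and $p\ge 1$ be integers, let $h>0$, let $Q\subset\mathbb{R}^D$ be a finite set of query points, let $c_Q\in\mathbb{R}^D$, and let $R\subset\mathbb{R}^D$ be a finite set of reference points. For each multi-index $\beta$ with $\beta<p$, define the local moment $$L_\beta=\sum_{r\in R}\frac{(-1)^{|\beta|}}{\beta!}\,h_\beta\!\left(\frac{c_Q-r}{\sqrt{2h^2}}\right),$$ and for $q\in\mathbb{R}^D$ define $$\widetilde G(q)=\sum_{\beta<p}L_\beta\left(\frac{q-c_Q}{\sqrt{2h^2}}\right)^{\beta},\qquad G(q)=\sum_{r\in R}e^{-\|q-r\|^2/(2h^2)}.$$ Suppose there is $r_0$ with $0\le r_0<1$ such that $\|q-c_Q\|_\infty<r_0h$ for every $q\in Q$. Then for every $q\in Q$, $$\bigl|\widetilde G(q)-G(q)\bigr|\le\frac{|R|}{(1-r_0)^D}\sum_{k=0}^{D-1}\binom{D}{k}(1-r_0^p)^k\left(\frac{r_0^p}{\sqrt{p!}}\right)^{D-k}.$$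
   Context: Hermite polynomials: $H_n(t)=(-1)^n e^{t^2}\frac{d^n}{dt^n}e^{-t^2}$ for $t\in\mathbb{R}$; Hermite functions: $h_n(t)=e^{-t^2}H_n(t)$. For a $D$-dimensional multi-index $\alpha=(\alpha[1],\dots,\alpha[D])$ of non-negative integers and $t\in\mathbb{R}^D$: $h_\alpha(t)=\prod_{d=1}^D h_{\alpha[d]}(t[d])$, $|\alpha|=\sum_d\alpha[d]$, $\alpha!=\prod_d\alpha[d]!$, $t^\alpha=\prod_d t[d]^{\alpha[d]}$. For an integer $p$, "$\alpha<p$" means $\alpha[d]<p$ for every $d=1,\dots,D$ (so the sum over $\beta<p$ has $p^D$ terms). $\|\cdot\|$ is the Euclidean norm and $\|\cdot\|_\infty$ the max norm; $|R|$ is the number of points in $R$. *)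

theory Defs
  imports "HOL-Analysis.Analysis"
begin

definition hermite_poly :: "nat \<Rightarrow> real \<Rightarrow> real" where
  "hermite_poly n t = (-1) ^ n * exp (t\<^sup>2) * ((deriv ^^ n) (\<lambda>s. exp (- s\<^sup>2)) t)"

definition hermite_fun :: "nat \<Rightarrow> real \<Rightarrow> real" where
  "hermite_fun n t = exp (- t\<^sup>2) * hermite_poly n t"

definition mhermite :: "('n::finite \<Rightarrow> nat) \<Rightarrow> real^'n \<Rightarrow> real" where
  "mhermite \<alpha> t = (\<Prod>d\<in>UNIV. hermite_fun (\<alpha> d) (t $ d))"

definition mabs :: "('n::finite \<Rightarrow> nat) \<Rightarrow> nat" where
  "mabs \<alpha> = (\<Sum>d\<in>UNIV. \<alpha> d)"

definition mfact :: "('n::finite \<Rightarrow> nat) \<Rightarrow> nat" where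
  "mfact \<alpha> = (\<Prod>d\<in>UNIV. fact (\<alpha> d))"

definition mpow :: "real^'n::finite \<Rightarrow> ('n \<Rightarrow> nat) \<Rightarrow> real" where
  "mpow t \<alpha> = (\<Prod>d\<in>UNIV. (t $ d) ^ (\<alpha> d))"

definition mindices_below :: "nat \<Rightarrow> ('n::finite \<Rightarrow> nat) set" where
  "mindices_below p = {\<beta>. \<forall>d. \<beta> d < p}"

definition local_moment :: "real \<Rightarrow> real^'n::finite \<Rightarrow> (real^'n) set \<Rightarrow> ('n \<Rightarrow> nat) \<Rightarrow> real" where
  "local_moment h cQ R \<beta> =
     (\<Sum>r\<in>R. (-1) ^ mabs \<beta> / real (mfact \<beta>) * mhermite \<beta> ((1 / sqrt (2 * h\<^sup>2)) *\<^sub>R (cQ - r)))"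

definition G_approx :: "nat \<Rightarrow> real \<Rightarrow> real^'n::finite \<Rightarrow> (real^'n) set \<Rightarrow> real^'n \<Rightarrow> real" where
  "G_approx p h cQ R q =
     (\<Sum>\<beta>\<in>mindices_below p. local_moment h cQ R \<beta> * mpow ((1 / sqrt (2 * h\<^sup>2)) *\<^sub>R (q - cQ)) \<beta>)"

definition G_exact :: "real \<Rightarrow> (real^'n::finite) set \<Rightarrow> real^'n \<Rightarrow> real" where
  "G_exact h R q = (\<Sum>r\<in>R. exp (- (norm (q - r))\<^sup>2 / (2 * h\<^sup>2)))"

end

theory Submission
  imports Defs
begin

(* Write g_n for the n-th derivative of exp(-x^2), so that the
   Hermite function is h_n = (-1)^n g_n.  With c = 1/sqrt(2h^2), the scaled
   query offset s = c(q - cQ) and the scaled centre offset t_r = c(cQ - r),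
   both G and its approximation split over reference points into products over
   the coordinates: G has the factors exp(-(t + s)^2), the approximation the
   degree-(p-1) Taylor polynomials A = sum_{n<p} g_n(t) s^n / n! of these.
   The hypothesis gives 2 s^2 <= r0^2 in each coordinate.  From the
   Cramer-type bound g_n(x)^2 <= 2^n n! every Taylor term is at most
   r0^n / sqrt(n!), so |A| <= a = (1 - r0^p)/(1 - r0) and, by the Lagrange
   remainder, |exp(-(t+s)^2) - A| <= r0^p/sqrt(p!) <= b = r0^p/(sqrt(p!)(1-r0)).
   A product perturbation lemma bounds the difference of the D-fold products by
   (a + b)^D - a^D, which expands binomially to the stated bound; summing over
   the reference points contributes the factor |R|. *)

section \<open>Derivatives of the Gaussian\<close>

text \<open>The derivatives of \<open>exp (-x\<^sup>2)\<close>, given by the Hermite three-term recurrence.\<close>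
fun gauss_deriv :: "nat \<Rightarrow> real \<Rightarrow> real" where
  "gauss_deriv 0 x = exp (- x\<^sup>2)"
| "gauss_deriv (Suc 0) x = -2 * x * exp (- x\<^sup>2)"
| "gauss_deriv (Suc (Suc n)) x =
     -2 * x * gauss_deriv (Suc n) x - 2 * real (Suc n) * gauss_deriv n x"

lemma gauss_deriv_has_derivative:
  "(gauss_deriv n has_real_derivative gauss_deriv (Suc n) x) (at x)"
proof (induction n x rule: gauss_deriv.induct)
  case (1 x)
  show ?case
    by (rule DERIV_cong, auto intro!: derivative_eq_intros simp: fun_eq_iff)
next
  case (2 x)
  show ?case
    by (rule DERIV_cong, auto intro!: derivative_eq_intros simp: fun_eq_iff)
next
  case (3 n x)
  have e: "gauss_deriv (Suc (Suc n)) =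
      (\<lambda>y. -2 * y * gauss_deriv (Suc n) y - 2 * real (Suc n) * gauss_deriv n y)"
    by (rule ext) simp
  have lin: "((\<lambda>y. -2 * y) has_real_derivative -2) (at x)"
    by (auto intro!: derivative_eq_intros)
  note D = DERIV_diff[OF DERIV_mult'[OF lin "3.IH"(1)]
                         DERIV_cmult[OF "3.IH"(2), of "2 * real (Suc n)"]]
  show ?case unfolding e
    by (rule DERIV_cong[OF D]) (simp add: algebra_simps)
qed

lemma gauss_deriv_funpow: "(deriv ^^ n) (gauss_deriv 0) = gauss_deriv n"
proof (induction n)
  case (Suc n)
  have "(deriv ^^ Suc n) (gauss_deriv 0) = deriv (gauss_deriv n)"
    by (simp only: funpow.simps o_apply Suc.IH)
  also have "\<dots> = gauss_deriv (Suc n)"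
    by (intro ext DERIV_imp_deriv gauss_deriv_has_derivative)
  finally show ?case .
qed simp

lemma hermite_fun_eq_gauss_deriv: "hermite_fun n t = (-1) ^ n * gauss_deriv n t"
proof -
  have "(\<lambda>s::real. exp (- s\<^sup>2)) = gauss_deriv 0" by (rule ext) simp
  then have "hermite_poly n t = (-1) ^ n * exp (t\<^sup>2) * gauss_deriv n t"
    unfolding hermite_poly_def by (simp only: gauss_deriv_funpow)
  then show ?thesis unfolding hermite_fun_def by (simp add: exp_minus field_simps)
qed

section \<open>A Cramer-type bound \<open>g\<^sub>n(x)\<^sup>2 \<le> 2\<^sup>n n!\<close>\<close>

text \<open>At the origin the recurrence reduces to \<open>g\<^sub>n\<^sub>+\<^sub>2(0) = -2(n+1) g\<^sub>n(0)\<close>: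
  consecutive values cannot both be nonzero, and the values grow slower than
  \<open>2\<^sup>n n!\<close>.\<close>
lemma gauss_deriv_zero_alternates: "gauss_deriv n 0 * gauss_deriv (Suc n) 0 = 0"
  by (induction n) auto

lemma gauss_deriv_zero_bound: "(gauss_deriv n 0)\<^sup>2 \<le> 2 ^ n * fact n"
proof (induction n rule: induct_nat_012)
  case (ge2 n)
  have "(gauss_deriv (Suc (Suc n)) 0)\<^sup>2 = 4 * (real (Suc n))\<^sup>2 * (gauss_deriv n 0)\<^sup>2"
    by (simp add: power2_eq_square algebra_simps)
  also have "\<dots> \<le> 4 * (real (Suc n))\<^sup>2 * (2 ^ n * fact n)"
    using ge2.IH(1) by (intro mult_left_mono) auto
  also have "\<dots> \<le> 2 ^ Suc (Suc n) * fact (Suc (Suc n))"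
    by (simp add: power2_eq_square algebra_simps)
  finally show ?case .
qed simp_all

text \<open>The energy \<open>g\<^sub>n\<^sup>2 + g\<^sub>n\<^sub>+\<^sub>1\<^sup>2/(2n+2)\<close> has derivative
  \<open>-4x g\<^sub>n\<^sub>+\<^sub>1\<^sup>2/(2n+2)\<close>, so it is maximal at the origin.\<close>
definition gauss_energy :: "nat \<Rightarrow> real \<Rightarrow> real" where
  "gauss_energy n y = (gauss_deriv n y)\<^sup>2 + (gauss_deriv (Suc n) y)\<^sup>2 / (2 * real n + 2)"

lemma gauss_energy_has_derivative:
  "(gauss_energy n has_real_derivative
      (- 4 * y * (gauss_deriv (Suc n) y)\<^sup>2 / (2 * real n + 2))) (at y)"
proof -
  have sq: "((\<lambda>y. (gauss_deriv m y)\<^sup>2) has_real_derivative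
              2 * gauss_deriv m y * gauss_deriv (Suc m) y) (at y)" for m
    by (rule DERIV_cong[OF DERIV_power[OF gauss_deriv_has_derivative[of m y], of 2]])
      (simp add: power2_eq_square)
  have D: "(gauss_energy n has_real_derivative (2 * gauss_deriv n y * gauss_deriv (Suc n) y
      + 2 * gauss_deriv (Suc n) y * gauss_deriv (Suc (Suc n)) y / (2 * real n + 2))) (at y)"
    unfolding gauss_energy_def[abs_def] by (intro DERIV_add DERIV_cdivide sq)
  have rec: "gauss_deriv (Suc (Suc n)) y =
      -2 * y * gauss_deriv (Suc n) y - (2 * real n + 2) * gauss_deriv n y"
    by simp
  have "2 * real n + 2 \<noteq> 0" by (simp add: add_nonneg_pos)
  then show ?thesis
    by (intro DERIV_cong[OF D]) (simp only: rec, simp add: field_simps power2_eq_square)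
qed

lemma gauss_energy_le_zero: "gauss_energy n x \<le> gauss_energy n 0"
proof (cases "x \<ge> 0")
  case True
  show ?thesis
    by (rule DERIV_nonpos_imp_nonincreasing[OF True])
      (use gauss_energy_has_derivative in
        \<open>auto intro!: exI divide_nonpos_pos mult_nonpos_nonneg\<close>)
next
  case False
  show ?thesis
  proof (rule DERIV_nonneg_imp_nondecreasing[of x 0])
    fix z :: real assume "x \<le> z" "z \<le> 0"
    then have "0 \<le> - 4 * z * (gauss_deriv (Suc n) z)\<^sup>2 / (2 * real n + 2)"
      by (intro divide_nonneg_pos mult_nonneg_nonneg mult_nonpos_nonpos) auto
    then show "\<exists>y. (gauss_energy n has_real_derivative y) (at z) \<and> 0 \<le> y"
      using gauss_energy_has_derivative by blast
  qed (use False in auto)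
qed

lemma gauss_energy_zero_bound: "gauss_energy n 0 \<le> 2 ^ n * fact n"
proof (cases "gauss_deriv n 0 = 0")
  case True
  have "(gauss_deriv (Suc n) 0)\<^sup>2 / (2 * real n + 2)
      \<le> 2 ^ Suc n * fact (Suc n) / (2 * real n + 2)"
    by (intro divide_right_mono gauss_deriv_zero_bound) auto
  also have "\<dots> = 2 ^ n * fact n" by (simp add: field_simps)
  finally show ?thesis using True unfolding gauss_energy_def by simp
next
  case False
  then have "gauss_deriv (Suc n) 0 = 0" using gauss_deriv_zero_alternates[of n] by simp
  then show ?thesis using gauss_deriv_zero_bound[of n] unfolding gauss_energy_def by simp
qed

theorem gauss_deriv_bound: "(gauss_deriv n x)\<^sup>2 \<le> 2 ^ n * fact n"
proof -
  have "(gauss_deriv n x)\<^sup>2 \<le> gauss_energy n x" unfolding gauss_energy_def by simp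
  also have "\<dots> \<le> gauss_energy n 0" by (rule gauss_energy_le_zero)
  also have "\<dots> \<le> 2 ^ n * fact n" by (rule gauss_energy_zero_bound)
  finally show ?thesis .
qed

section \<open>One-dimensional Taylor estimates\<close>

definition gauss_taylor :: "nat \<Rightarrow> real \<Rightarrow> real \<Rightarrow> real" where
  "gauss_taylor p t s = (\<Sum>n<p. gauss_deriv n t * s ^ n / fact n)"

lemma gauss_taylor_term_bound:
  assumes "2 * s\<^sup>2 \<le> r0\<^sup>2" "0 \<le> r0"
  shows "\<bar>gauss_deriv n t * s ^ n / fact n\<bar> \<le> r0 ^ n / sqrt (fact n)"
proof -
  have "(gauss_deriv n t * s ^ n / fact n)\<^sup>2 = (gauss_deriv n t)\<^sup>2 * (s\<^sup>2) ^ n / (fact n)\<^sup>2"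
    by (simp add: power_mult_distrib power_divide power_mult[symmetric] mult.commute)
  also have "\<dots> \<le> (2 ^ n * fact n) * (s\<^sup>2) ^ n / (fact n)\<^sup>2"
    by (intro divide_right_mono mult_right_mono gauss_deriv_bound) auto
  also have "\<dots> = (2 * s\<^sup>2) ^ n / fact n"
    by (simp add: power2_eq_square power_mult_distrib)
  also have "\<dots> \<le> (r0\<^sup>2) ^ n / fact n"
    by (intro divide_right_mono power_mono assms) auto
  also have "\<dots> = (r0 ^ n / sqrt (fact n))\<^sup>2"
    by (simp add: power_divide power_mult[symmetric] mult.commute)
  finally have "\<bar>gauss_deriv n t * s ^ n / fact n\<bar> \<le> \<bar>r0 ^ n / sqrt (fact n)\<bar>"
    by (simp only: abs_le_square_iff)
  then show ?thesis using assms(2) by simp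
qed

lemma gauss_taylor_bound:
  assumes "2 * s\<^sup>2 \<le> r0\<^sup>2" "0 \<le> r0"
  shows "\<bar>gauss_taylor p t s\<bar> \<le> (\<Sum>n<p. r0 ^ n)"
  unfolding gauss_taylor_def
proof (rule order_trans[OF sum_abs sum_mono])
  fix n
  have "r0 ^ n / sqrt (fact n) \<le> r0 ^ n"
    using assms(2) by (simp add: divide_le_eq mult_le_cancel_left1 fact_ge_1)
  then show "\<bar>gauss_deriv n t * s ^ n / fact n\<bar> \<le> r0 ^ n"
    using gauss_taylor_term_bound[OF assms] by (rule order_trans[rotated])
qed

text \<open>Lagrange form of the remainder, estimated by the next Taylor term.\<close>
lemma gauss_taylor_remainder:
  assumes "2 * s\<^sup>2 \<le> r0\<^sup>2" "0 \<le> r0"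
  shows "\<bar>exp (- (t + s)\<^sup>2) - gauss_taylor p t s\<bar> \<le> r0 ^ p / sqrt (fact p)"
proof -
  have shifted: "(\<lambda>u. gauss_deriv 0 (t + u)) = (\<lambda>u. exp (- (t + u)\<^sup>2))"
    by (rule ext) simp
  have "\<forall>m x. ((\<lambda>u. gauss_deriv m (t + u)) has_real_derivative gauss_deriv (Suc m) (t + x)) (at x)"
  proof (intro allI)
    fix m x
    have "((\<lambda>u. t + u) has_real_derivative 1) (at x)" by (auto intro!: derivative_eq_intros)
    from DERIV_chain2[OF gauss_deriv_has_derivative this]
    show "((\<lambda>u. gauss_deriv m (t + u)) has_real_derivative gauss_deriv (Suc m) (t + x)) (at x)"
      by simp
  qed
  from Maclaurin_all_le[OF shifted this, of s p] obtain \<xi> where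
    "exp (- (t + s)\<^sup>2) = (\<Sum>m<p. gauss_deriv m t / fact m * s ^ m)
                        + gauss_deriv p (t + \<xi>) / fact p * s ^ p"
    by auto
  then have "exp (- (t + s)\<^sup>2) - gauss_taylor p t s = gauss_deriv p (t + \<xi>) * s ^ p / fact p"
    unfolding gauss_taylor_def by simp
  then show ?thesis using gauss_taylor_term_bound[OF assms] by simp
qed

section \<open>Perturbation of products\<close>

lemma prod_perturbation_bound:
  fixes A B :: "'i \<Rightarrow> real"
  assumes "finite I" "\<And>i. i \<in> I \<Longrightarrow> \<bar>A i\<bar> \<le> a" "\<And>i. i \<in> I \<Longrightarrow> \<bar>B i\<bar> \<le> b"
  shows "\<bar>(\<Prod>i\<in>I. A i + B i) - (\<Prod>i\<in>I. A i)\<bar> \<le> (a + b) ^ card I - a ^ card I"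
  using assms
proof (induction I rule: finite_induct)
  case (insert j I)
  define P where "P = (\<Prod>i\<in>I. A i + B i)"
  define P' where "P' = (\<Prod>i\<in>I. A i)"
  have ih: "\<bar>P - P'\<bar> \<le> (a + b) ^ card I - a ^ card I"
    unfolding P_def P'_def using insert by auto
  have "\<bar>P'\<bar> \<le> (\<Prod>i\<in>I. a)"
    unfolding P'_def abs_prod using insert by (intro prod_mono) auto
  then have P': "\<bar>P'\<bar> \<le> a ^ card I" by simp
  have Aj: "\<bar>A j\<bar> \<le> a" and Bj: "\<bar>B j\<bar> \<le> b" using insert by auto
  then have ABj: "\<bar>A j + B j\<bar> \<le> a + b" by linarith
  have "(\<Prod>i\<in>insert j I. A i + B i) - (\<Prod>i\<in>insert j I. A i)
      = (A j + B j) * (P - P') + B j * P'"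
    using insert unfolding P_def P'_def by (simp add: algebra_simps)
  also have "\<bar>\<dots>\<bar> \<le> \<bar>A j + B j\<bar> * \<bar>P - P'\<bar> + \<bar>B j\<bar> * \<bar>P'\<bar>"
    by (metis abs_mult abs_triangle_ineq)
  also have "\<dots> \<le> (a + b) * ((a + b) ^ card I - a ^ card I) + b * a ^ card I"
    using ABj Bj ih P' by (intro add_mono mult_mono) auto
  also have "\<dots> = (a + b) ^ card (insert j I) - a ^ card (insert j I)"
    using insert by (simp add: algebra_simps)
  finally show ?case .
qed simp

lemma binomial_power_diff:
  fixes a b :: real
  assumes "D \<ge> 1"
  shows "(a + b) ^ D - a ^ D = (\<Sum>k=0..D - 1. real (D choose k) * a ^ k * b ^ (D - k))"
proof -
  obtain m where m: "D = Suc m" using assms by (cases D) auto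
  have "(a + b) ^ D = (\<Sum>k\<le>D. real (D choose k) * a ^ k * b ^ (D - k))"
    by (rule binomial_ring)
  also have "\<dots> = (\<Sum>k\<le>m. real (D choose k) * a ^ k * b ^ (D - k)) + a ^ D"
    unfolding m by (simp add: sum.atMost_Suc)
  finally show ?thesis using m by (simp add: atLeast0AtMost)
qed

lemma gauss_prod_taylor_error:
  fixes t s :: "'i \<Rightarrow> real" and I :: "'i set"
  assumes "finite I" "card I \<ge> 1" "\<And>i. 2 * (s i)\<^sup>2 \<le> r0\<^sup>2" "0 \<le> r0" "r0 < 1"
  defines "D \<equiv> card I"
  shows "\<bar>(\<Prod>i\<in>I. exp (- (t i + s i)\<^sup>2)) - (\<Prod>i\<in>I. gauss_taylor p (t i) (s i))\<bar>
    \<le> 1 / (1 - r0) ^ D *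
      (\<Sum>k=0..D - 1. real (D choose k) * (1 - r0 ^ p) ^ k * (r0 ^ p / sqrt (fact p)) ^ (D - k))"
proof -
  define a where "a = (1 - r0 ^ p) / (1 - r0)"
  define b where "b = r0 ^ p / sqrt (fact p) / (1 - r0)"
  have r1: "0 < 1 - r0" "1 - r0 \<le> 1" using assms(4,5) by auto
  have "\<bar>gauss_taylor p (t i) (s i)\<bar> \<le> a" for i
    using gauss_taylor_bound[OF assms(3,4)] assms(5) by (simp add: a_def sum_gp_strict)
  moreover have "\<bar>exp (- (t i + s i)\<^sup>2) - gauss_taylor p (t i) (s i)\<bar> \<le> b" for i
  proof -
    have "r0 ^ p / sqrt (fact p) \<le> b"
      unfolding b_def using r1 assms(4) by (simp add: le_divide_eq mult_left_le)
    then show ?thesis using gauss_taylor_remainder[OF assms(3,4)] by (rule order_trans[rotated])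
  qed
  ultimately have "\<bar>(\<Prod>i\<in>I. exp (- (t i + s i)\<^sup>2)) - (\<Prod>i\<in>I. gauss_taylor p (t i) (s i))\<bar>
      \<le> (a + b) ^ D - a ^ D"
    using prod_perturbation_bound[OF assms(1),
        of "\<lambda>i. gauss_taylor p (t i) (s i)" a "\<lambda>i. exp (- (t i + s i)\<^sup>2) - gauss_taylor p (t i) (s i)" b]
    unfolding D_def by simp
  also have "\<dots> = (\<Sum>k=0..D - 1. real (D choose k) * a ^ k * b ^ (D - k))"
    using assms(2) unfolding D_def by (rule binomial_power_diff)
  also have "\<dots> = (\<Sum>k=0..D - 1. real (D choose k) * (1 - r0 ^ p) ^ k *
                    (r0 ^ p / sqrt (fact p)) ^ (D - k) / (1 - r0) ^ D)"
  proof (rule sum.cong[OF refl])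
    fix k assume "k \<in> {0..D - 1}"
    then have "(1 - r0) ^ D = (1 - r0) ^ k * (1 - r0) ^ (D - k)"
      by (simp flip: power_add)
    then show "real (D choose k) * a ^ k * b ^ (D - k) = real (D choose k) * (1 - r0 ^ p) ^ k *
                 (r0 ^ p / sqrt (fact p)) ^ (D - k) / (1 - r0) ^ D"
      unfolding a_def b_def by (simp add: power_divide power_mult_distrib)
  qed
  finally show ?thesis by (simp add: sum_divide_distrib)
qed

section \<open>Factorisation of the Gauss transform over coordinates\<close>

text \<open>One summand of the Hermite expansion is a product of one-dimensional
  Taylor terms: the signs \<open>(-1)\<^sup>|\<^sup>\<beta>\<^sup>|\<close> cancel those relating \<open>h\<^sub>\<beta>\<close> to \<open>g\<^sub>\<beta>\<close>.\<close>
lemma hermite_term_factor: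
  fixes \<beta> :: "'n::finite \<Rightarrow> nat" and v w :: "real^'n"
  shows "(-1) ^ mabs \<beta> / real (mfact \<beta>) * mhermite \<beta> v * mpow w \<beta>
     = (\<Prod>d\<in>UNIV. gauss_deriv (\<beta> d) (v$d) * (w$d) ^ (\<beta> d) / fact (\<beta> d))"
proof -
  have signs: "(-1::real) ^ mabs \<beta> = (\<Prod>d\<in>UNIV. (-1) ^ (\<beta> d))"
    unfolding mabs_def by (rule power_sum)
  have signs_cancel: "(\<Prod>d\<in>UNIV. (-1::real) ^ (\<beta> d)) * (\<Prod>d\<in>UNIV. (-1) ^ (\<beta> d)) = 1"
    by (simp flip: prod.distrib power_mult_distrib)
  show ?thesis
    unfolding signs mfact_def mhermite_def mpow_def hermite_fun_eq_gauss_deriv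
    by (simp add: prod.distrib prod_dividef signs_cancel)
qed

lemma sum_mindices_below_prod:
  fixes f :: "'n::finite \<Rightarrow> nat \<Rightarrow> real"
  shows "(\<Sum>\<beta>\<in>mindices_below p. \<Prod>d\<in>UNIV. f d (\<beta> d)) = (\<Prod>d\<in>UNIV. \<Sum>n<p. f d n)"
proof -
  have indices: "mindices_below p = PiE UNIV (\<lambda>_. {..<p})"
    unfolding mindices_below_def PiE_UNIV_domain Pi_def by auto
  show ?thesis unfolding indices by (rule prod_sum_PiE[symmetric]) auto
qed

lemma G_approx_factor:
  fixes h :: real and cQ q :: "real^'n::finite" and R :: "(real^'n) set"
  defines "c \<equiv> 1 / sqrt (2 * h\<^sup>2)"
  shows "G_approx p h cQ R q =
    (\<Sum>r\<in>R. \<Prod>d\<in>UNIV. gauss_taylor p (c * (cQ$d - r$d)) (c * (q$d - cQ$d)))"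
proof -
  have "G_approx p h cQ R q = (\<Sum>r\<in>R. \<Sum>\<beta>\<in>mindices_below p.
      (-1) ^ mabs \<beta> / real (mfact \<beta>) * mhermite \<beta> (c *\<^sub>R (cQ - r)) * mpow (c *\<^sub>R (q - cQ)) \<beta>)"
    unfolding G_approx_def local_moment_def c_def[symmetric]
    by (simp add: sum_distrib_right sum.swap[of _ _ R])
  also have "\<dots> = (\<Sum>r\<in>R. \<Sum>\<beta>\<in>mindices_below p. \<Prod>d\<in>UNIV.
      gauss_deriv (\<beta> d) (c * (cQ$d - r$d)) * (c * (q$d - cQ$d)) ^ (\<beta> d) / fact (\<beta> d))"
    unfolding hermite_term_factor by simp
  also have "\<dots> = (\<Sum>r\<in>R. \<Prod>d\<in>UNIV. gauss_taylor p (c * (cQ$d - r$d)) (c * (q$d - cQ$d)))"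
    unfolding gauss_taylor_def
    by (intro sum.cong refl sum_mindices_below_prod
        [of "\<lambda>d n. gauss_deriv n (c * (cQ$d - _$d)) * (c * (q$d - cQ$d)) ^ n / fact n"])
  finally show ?thesis .
qed

lemma G_exact_factor:
  fixes h :: real and cQ q :: "real^'n::finite" and R :: "(real^'n) set"
  defines "c \<equiv> 1 / sqrt (2 * h\<^sup>2)"
  shows "G_exact h R q =
    (\<Sum>r\<in>R. \<Prod>d\<in>UNIV. exp (- (c * (cQ$d - r$d) + c * (q$d - cQ$d))\<^sup>2))"
  unfolding G_exact_def
proof (rule sum.cong[OF refl])
  fix r
  have c2: "c\<^sup>2 = 1 / (2 * h\<^sup>2)" unfolding c_def by (simp add: power_divide)
  have "(norm (q - r))\<^sup>2 = (\<Sum>d\<in>UNIV. (q$d - r$d)\<^sup>2)"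
    unfolding power2_norm_eq_inner inner_vec_def by (simp add: power2_eq_square)
  moreover have "(c * (cQ$d - r$d) + c * (q$d - cQ$d))\<^sup>2 = (q$d - r$d)\<^sup>2 / (2 * h\<^sup>2)" for d
    by (simp add: c2 power_mult_distrib flip: distrib_left)
  ultimately show "exp (- (norm (q - r))\<^sup>2 / (2 * h\<^sup>2)) =
      (\<Prod>d\<in>UNIV. exp (- (c * (cQ$d - r$d) + c * (q$d - cQ$d))\<^sup>2))"
    by (simp add: sum_divide_distrib exp_sum flip: sum_negf)
qed

lemma scaled_offset_bound:
  assumes "h > 0" "\<bar>x\<bar> < r0 * h"
  shows "2 * (1 / sqrt (2 * h\<^sup>2) * x)\<^sup>2 \<le> r0\<^sup>2"
proof -
  have "\<bar>x\<bar> \<le> \<bar>r0 * h\<bar>" using assms by linarith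
  then have "x\<^sup>2 \<le> (r0 * h)\<^sup>2" by (simp only: abs_le_square_iff)
  then show ?thesis
    using assms(1) by (simp add: power_mult_distrib power_divide divide_le_eq)
qed

theorem mainTheorem1:
  fixes Q R :: "(real^'n) set" and cQ :: "real^'n" and h r0 :: real and p :: nat
  assumes "p \<ge> 1" and "h > 0" and "finite Q" and "finite R"
    and "0 \<le> r0" and "r0 < 1"
    and "\<forall>q\<in>Q. \<forall>d. \<bar>q $ d - cQ $ d\<bar> < r0 * h"
  shows "\<forall>q\<in>Q. \<bar>G_approx p h cQ R q - G_exact h R q\<bar>
     \<le> real (card R) / (1 - r0) ^ CARD('n) *
        (\<Sum>k=0..CARD('n) - 1. real (CARD('n) choose k) * (1 - r0 ^ p) ^ k *
            (r0 ^ p / sqrt (fact p)) ^ (CARD('n) - k))"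
proof
  fix q assume "q \<in> Q"
  define c where "c = 1 / sqrt (2 * h\<^sup>2)"
  define E where "E = 1 / (1 - r0) ^ CARD('n) *
    (\<Sum>k=0..CARD('n) - 1. real (CARD('n) choose k) * (1 - r0 ^ p) ^ k *
       (r0 ^ p / sqrt (fact p)) ^ (CARD('n) - k))"
  have offsets: "2 * (c * (q$d - cQ$d))\<^sup>2 \<le> r0\<^sup>2" for d
    unfolding c_def using scaled_offset_bound assms(2,7) \<open>q \<in> Q\<close> by blast
  have "\<bar>G_approx p h cQ R q - G_exact h R q\<bar>
      \<le> (\<Sum>r\<in>R. \<bar>(\<Prod>d\<in>UNIV. exp (- (c * (cQ$d - r$d) + c * (q$d - cQ$d))\<^sup>2))
                 - (\<Prod>d\<in>UNIV. gauss_taylor p (c * (cQ$d - r$d)) (c * (q$d - cQ$d)))\<bar>)"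
    unfolding G_approx_factor G_exact_factor[where cQ=cQ] c_def[symmetric]
    by (subst abs_minus_commute, simp only: flip: sum_subtractf) (rule sum_abs)
  also have "\<dots> \<le> (\<Sum>r\<in>R. E)"
    unfolding E_def
    by (intro sum_mono gauss_prod_taylor_error offsets assms(5,6)) simp_all
  finally show "\<bar>G_approx p h cQ R q - G_exact h R q\<bar> \<le> real (card R) / (1 - r0) ^ CARD('n) *
        (\<Sum>k=0..CARD('n) - 1. real (CARD('n) choose k) * (1 - r0 ^ p) ^ k *
            (r0 ^ p / sqrt (fact p)) ^ (CARD('n) - k))"
    unfolding E_def by simp
qed

end
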